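(* Let $T$ be a complete countable theory and suppose the formula $\varphi(\bar x;\bar y)$ has the independence property for $T$. Then there are a countable model $M\models T$ and a sequence $\langle \bar b_n : n<\omega\rangle$ of tuples from $M$ with $\ell(\bar b_n)=\ell(\bar y)$ such that: (i) $\varphi$ has the independence property over this sequence, i.e. for all finite disjoint $A,B\subseteq\omega$, $M\models\exists\bar x\,\big(\bigwedge_{n\in A}\varphi(\bar x,\bar b_n)\wedge\bigwedge_{n\in B}\neg\varphi(\bar x,\bar b_n)\big)$; and (ii) for every $\bar a\in{}^{\ell(\bar x)}M$ there is a truth value $\mathbf{t}\in\{0,1\}$ such that for all but finitely many $n$, $M\models\varphi[\bar a,\bar b_n]^{\mathbf t}$.
   Context: For a formula $\psi$, $\psi^1$ denotes $\psi$ and $\psi^0$ denotes $\neg\psi$. *)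

theory Defs
  imports Main "HOL-Library.Countable" "HOL-Library.Countable_Set"
begin

datatype 'f trm = Var nat | Fn 'f "'f trm list"

datatype ('f, 'r) fm =
    FF
  | Eq "'f trm" "'f trm"
  | Rel 'r "'f trm list"
  | Neg "('f, 'r) fm"
  | Conj "('f, 'r) fm" "('f, 'r) fm"
  | Ex nat "('f, 'r) fm"

fun wf_trm :: "('f \<Rightarrow> nat) \<Rightarrow> 'f trm \<Rightarrow> bool" where
  "wf_trm fa (Var n) = True"
| "wf_trm fa (Fn f ts) = (length ts = fa f \<and> (\<forall>t\<in>set ts. wf_trm fa t))"

fun wf_fm :: "('f \<Rightarrow> nat) \<Rightarrow> ('r \<Rightarrow> nat) \<Rightarrow> ('f, 'r) fm \<Rightarrow> bool" where
  "wf_fm fa ra FF = True"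
| "wf_fm fa ra (Eq s t) = (wf_trm fa s \<and> wf_trm fa t)"
| "wf_fm fa ra (Rel r ts) = (length ts = ra r \<and> (\<forall>t\<in>set ts. wf_trm fa t))"
| "wf_fm fa ra (Neg p) = wf_fm fa ra p"
| "wf_fm fa ra (Conj p q) = (wf_fm fa ra p \<and> wf_fm fa ra q)"
| "wf_fm fa ra (Ex x p) = wf_fm fa ra p"

fun fv_trm :: "'f trm \<Rightarrow> nat set" where
  "fv_trm (Var n) = {n}"
| "fv_trm (Fn f ts) = (\<Union>t\<in>set ts. fv_trm t)"

fun fv :: "('f, 'r) fm \<Rightarrow> nat set" where
  "fv FF = {}"
| "fv (Eq s t) = fv_trm s \<union> fv_trm t"
| "fv (Rel r ts) = (\<Union>t\<in>set ts. fv_trm t)"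
| "fv (Neg p) = fv p"
| "fv (Conj p q) = fv p \<union> fv q"
| "fv (Ex x p) = fv p - {x}"

definition sentence :: "('f \<Rightarrow> nat) \<Rightarrow> ('r \<Rightarrow> nat) \<Rightarrow> ('f, 'r) fm \<Rightarrow> bool" where
  "sentence fa ra p \<longleftrightarrow> wf_fm fa ra p \<and> fv p = {}"

record ('f, 'r, 'a) struct =
  univ :: "'a set"
  fint :: "'f \<Rightarrow> 'a list \<Rightarrow> 'a"
  rint :: "'r \<Rightarrow> 'a list \<Rightarrow> bool"

definition is_struct :: "('f \<Rightarrow> nat) \<Rightarrow> ('f, 'r, 'a) struct \<Rightarrow> bool" where
  "is_struct fa M \<longleftrightarrow> univ M \<noteq> {} \<and>
     (\<forall>f as. length as = fa f \<and> set as \<subseteq> univ M \<longrightarrow> fint M f as \<in> univ M)"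

fun eval :: "('f, 'r, 'a) struct \<Rightarrow> (nat \<Rightarrow> 'a) \<Rightarrow> 'f trm \<Rightarrow> 'a" where
  "eval M e (Var n) = e n"
| "eval M e (Fn f ts) = fint M f (map (eval M e) ts)"

fun sat :: "('f, 'r, 'a) struct \<Rightarrow> (nat \<Rightarrow> 'a) \<Rightarrow> ('f, 'r) fm \<Rightarrow> bool" where
  "sat M e FF = False"
| "sat M e (Eq s t) = (eval M e s = eval M e t)"
| "sat M e (Rel r ts) = rint M r (map (eval M e) ts)"
| "sat M e (Neg p) = (\<not> sat M e p)"
| "sat M e (Conj p q) = (sat M e p \<and> sat M e q)"
| "sat M e (Ex x p) = (\<exists>d\<in>univ M. sat M (e(x := d)) p)"

definition is_model :: "('f \<Rightarrow> nat) \<Rightarrow> ('f, 'r) fm set \<Rightarrow> ('f, 'r, 'a) struct \<Rightarrow> bool" where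
  "is_model fa T M \<longleftrightarrow> is_struct fa M \<and>
     (\<forall>p\<in>T. \<forall>e. range e \<subseteq> univ M \<longrightarrow> sat M e p)"

fun upd_list :: "(nat \<Rightarrow> 'a) \<Rightarrow> nat list \<Rightarrow> 'a list \<Rightarrow> (nat \<Rightarrow> 'a)" where
  "upd_list e (v # vs) (a # as) = (upd_list e vs as)(v := a)"
| "upd_list e _ _ = e"

text \<open>M satisfies phi[a, b], where phi = phi(xs; ys), a is assigned to xs and b to ys
  (the remaining variables, which do not occur free in phi, get some element of M).\<close>
definition holds ::
  "('f, 'r, 'a) struct \<Rightarrow> ('f, 'r) fm \<Rightarrow> nat list \<Rightarrow> nat list \<Rightarrow> 'a list \<Rightarrow> 'a list \<Rightarrow> bool" where
  "holds M p xs ys a b =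
     sat M (upd_list (upd_list (\<lambda>_. SOME d. d \<in> univ M) ys b) xs a) p"

definition fm_pow :: "('f, 'r) fm \<Rightarrow> nat \<Rightarrow> ('f, 'r) fm" where
  "fm_pow p t = (if t = 1 then p else Neg p)"

definition tuple_in :: "('f, 'r, 'a) struct \<Rightarrow> nat \<Rightarrow> 'a list \<Rightarrow> bool" where
  "tuple_in M n a \<longleftrightarrow> length a = n \<and> set a \<subseteq> univ M"

text \<open>phi(xs; ys) has the independence property in M (finitary formulation):
  for every n there are b_0..b_{n-1} such that every subset of {0..n-1} is cut out
  by some a.\<close>
definition has_IP_in ::
  "('f, 'r, 'a) struct \<Rightarrow> ('f, 'r) fm \<Rightarrow> nat list \<Rightarrow> nat list \<Rightarrow> bool" where
  "has_IP_in M p xs ys \<longleftrightarrow>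
     (\<forall>n. \<exists>b :: nat \<Rightarrow> 'a list. (\<forall>i<n. tuple_in M (length ys) (b i)) \<and>
        (\<forall>S \<subseteq> {..<n}. \<exists>a. tuple_in M (length xs) a \<and>
            (\<forall>i<n. holds M p xs ys a (b i) \<longleftrightarrow> i \<in> S)))"

end

theory Submission
  imports Defs
begin

text \<open>
  Let \<open>K\<close> be a model of \<open>T\<close> in which \<open>\<phi>\<close> has the independence property, and let \<open>KU\<close>
  be its ultrapower by a nonprincipal ultrafilter \<open>U\<close> on \<open>\<nat>\<close>. Gluing together, along \<open>U\<close>,
  the \<open>i\<close>-th members of shattered sequences of growing length gives tuples \<open>c i\<close> of \<open>KU\<close>
  over which \<open>\<phi>\<close> is independent. By the theorem of Los, \<open>KU\<close> realizes every countable
  family of finitely satisfiable conditions that are themselves ultraproducts; in particular,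
  over any countable set of parameters it realizes the \<open>U\<close>-limit of the types of the \<open>c i\<close>.

  Build a countable chain \<open>S\<^sub>0 \<subseteq> S\<^sub>1 \<subseteq> \<dots>\<close> closed under Skolem witnesses, where
  \<open>b\<^sub>n\<close> realizes the limit type over \<open>S\<^sub>n\<close> and \<open>S\<^sub>n\<^sub>+\<^sub>1\<close> contains \<open>b\<^sub>n\<close> and witnesses
  for all finite patterns over \<open>S\<^sub>n\<close>. The union is a countable elementary substructure
  \<open>N\<close> of \<open>KU\<close>. A tuple \<open>a\<close> of \<open>N\<close> lies in some \<open>S\<^sub>m\<close>, so for \<open>n \<ge> m\<close> the truth value
  of \<open>\<phi>(a, b\<^sub>n)\<close> is the \<open>U\<close>-limit of that of \<open>\<phi>(a, c i)\<close>; and by induction on \<open>n\<close>,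
  every finite pattern over the \<open>b\<^sub>n\<close> is realized. Finally \<open>N\<close> is copied into the
  infinite type \<open>'a\<close>.
\<close>

section \<open>Syntax and satisfaction\<close>

instance trm :: (countable) countable by countable_datatype
instance fm :: (countable, countable) countable by countable_datatype

lemma finite_fv_trm: "finite (fv_trm t)"
  by (induction t) auto

lemma finite_fv: "finite (fv p)"
  by (induction p) (auto simp: finite_fv_trm)

lemma eval_cong: "(\<And>v. v \<in> fv_trm t \<Longrightarrow> e v = e' v) \<Longrightarrow> eval M e t = eval M e' t"
proof (induction t)
  case (Fn f ts)
  have "map (eval M e) ts = map (eval M e') ts"
    using Fn by (intro map_cong) auto
  then show ?case by (simp only: eval.simps)
qed simp

lemma sat_cong: "(\<And>v. v \<in> fv p \<Longrightarrow> e v = e' v) \<Longrightarrow> sat M e p = sat M e' p"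
proof (induction p arbitrary: e e')
  case (Eq s t)
  have "eval M e s = eval M e' s" "eval M e t = eval M e' t"
    using Eq by (auto intro!: eval_cong)
  then show ?case by simp
next
  case (Rel r ts)
  have "map (eval M e) ts = map (eval M e') ts"
    using Rel by (intro map_cong eval_cong) auto
  then show ?case by (simp only: sat.simps)
next
  case (Neg p)
  have "sat M e p = sat M e' p"
    using Neg.prems by (intro Neg.IH) simp
  then show ?case by simp
next
  case (Conj p q)
  have "sat M e p = sat M e' p" "sat M e q = sat M e' q"
    using Conj.prems by (intro Conj.IH; auto)+
  then show ?case by simp
next
  case (Ex x p)
  have "sat M (e(x := d)) p = sat M (e'(x := d)) p" for d
    using Ex.prems by (intro Ex.IH) auto
  then show ?case by simp
qed simp

lemma upd_list_notin: "v \<notin> set vs \<Longrightarrow> upd_list e vs as v = e v"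
  by (induction e vs as rule: upd_list.induct) auto

lemma upd_list_in: "length vs = length as \<Longrightarrow> v \<in> set vs \<Longrightarrow> upd_list e vs as v = upd_list e' vs as v"
  by (induction e vs as rule: upd_list.induct) auto

lemma upd_list_map: "f (upd_list e vs as v) = upd_list (\<lambda>w. f (e w)) vs (map f as) v"
  by (induction e vs as rule: upd_list.induct) auto

lemma upd_list_in_set: "(\<And>v. e v \<in> A) \<Longrightarrow> set as \<subseteq> A \<Longrightarrow> upd_list e vs as v \<in> A"
  by (induction e vs as rule: upd_list.induct) auto

lemma holds_iff_sat:
  assumes "length a = length xs" "length b = length ys" "fv p \<subseteq> set xs \<union> set ys"
  shows "holds M p xs ys a b \<longleftrightarrow> sat M (upd_list (upd_list e ys b) xs a) p"
  unfolding holds_def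
proof (rule sat_cong)
  fix v assume "v \<in> fv p"
  then show "upd_list (upd_list (\<lambda>_. SOME d. d \<in> univ M) ys b) xs a v = upd_list (upd_list e ys b) xs a v"
  proof (cases "v \<in> set xs")
    case True then show ?thesis by (rule upd_list_in[OF assms(1)[symmetric]])
  next
    case False
    then have "v \<in> set ys" using assms(3) \<open>v \<in> fv p\<close> by auto
    then show ?thesis
      unfolding upd_list_notin[OF False] by (rule upd_list_in[OF assms(2)[symmetric]])
  qed
qed

lemma some_in_univ: "is_struct fa M \<Longrightarrow> (SOME d. d \<in> univ M) \<in> univ M"
  unfolding is_struct_def by (simp add: some_in_eq)

lemma is_struct_fint:
  "is_struct fa M \<Longrightarrow> length as = fa F \<Longrightarrow> set as \<subseteq> univ M \<Longrightarrow> fint M F as \<in> univ M"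
  unfolding is_struct_def by blast

lemma holds_env_in_univ:
  assumes "is_struct fa M" "set a \<subseteq> univ M" "set b \<subseteq> univ M"
  shows "upd_list (upd_list (\<lambda>_. SOME d. d \<in> univ M) ys b) xs a v \<in> univ M"
  using assms by (intro upd_list_in_set some_in_univ) auto

lemma holds_Neg: "holds M (Neg p) xs ys a b \<longleftrightarrow> \<not> holds M p xs ys a b"
  unfolding holds_def by simp

lemma replicate_tuple_in: "d \<in> univ M \<Longrightarrow> tuple_in M n (replicate n d)"
  unfolding tuple_in_def by auto

section \<open>Nonprincipal ultrafilters\<close>

definition ultrafilter :: "'a filter \<Rightarrow> bool" where
  "ultrafilter F \<longleftrightarrow> F \<noteq> bot \<and> (\<forall>P. eventually P F \<or> eventually (\<lambda>x. \<not> P x) F)"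

lemma eventually_Inf_chain:
  assumes "C \<noteq> {}" and "\<And>F G. F \<in> C \<Longrightarrow> G \<in> C \<Longrightarrow> F \<le> G \<or> G \<le> F"
  shows "eventually P (Inf C) \<longleftrightarrow> (\<exists>F\<in>C. eventually P F)"
proof -
  have "\<exists>H\<in>C. id H \<le> inf (id F) (id G)" if "F \<in> C" "G \<in> C" for F G
    using assms(2)[OF that] that by (auto simp: inf_absorb1 inf_absorb2)
  then show ?thesis using eventually_INF_base[of C id P] assms(1) by simp
qed

text \<open>A minimal proper filter below the Frechet filter, obtained by Zorn's lemma, is ultra:
  otherwise it could be refined by a set meeting all of its members.\<close>

lemma ex_nonprincipal_ultrafilter: "\<exists>U :: nat filter. ultrafilter U \<and> U \<le> sequentially"
proof -
  let ?A = "{F :: nat filter. F \<noteq> bot \<and> F \<le> sequentially}"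
  have "\<exists>m\<in>?A. \<forall>a\<in>?A. a \<le> m \<longrightarrow> a = m"
  proof (rule predicate_Zorn)
    show "partial_order_on ?A (relation_of (\<lambda>a b. b \<le> a) ?A)"
      by (auto simp: partial_order_on_def preorder_on_def refl_on_def trans_def antisym_def relation_of_def)
  next
    fix C assume "C \<in> Chains (relation_of (\<lambda>a b. b \<le> a) ?A)"
    then have CA: "C \<subseteq> ?A" and lin: "\<And>a b. a \<in> C \<Longrightarrow> b \<in> C \<Longrightarrow> a \<le> b \<or> b \<le> a"
      by (auto simp: Chains_def relation_of_def)
    show "\<exists>u\<in>?A. \<forall>a\<in>C. u \<le> a"
    proof (cases "C = {}")
      case True then show ?thesis by (intro bexI[of _ sequentially]) auto
    next
      case False
      have "Inf C \<noteq> bot"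
        using eventually_Inf_chain[OF False lin, of "\<lambda>_. False"] CA by (auto simp: trivial_limit_def)
      moreover have "Inf C \<le> sequentially"
        using False CA by (auto intro: Inf_lower2)
      ultimately show ?thesis by (auto intro: Inf_lower)
    qed
  qed
  then obtain U where U: "U \<in> ?A" and min: "\<And>F. F \<in> ?A \<Longrightarrow> F \<le> U \<Longrightarrow> F = U" by blast
  have "eventually P U \<or> eventually (\<lambda>x. \<not> P x) U" for P
  proof (rule disjCI)
    assume "\<not> eventually (\<lambda>x. \<not> P x) U"
    then have "inf U (principal {x. P x}) \<in> ?A"
      using U by (auto simp: trivial_limit_def eventually_inf_principal intro: le_infI1)
    then have "inf U (principal {x. P x}) = U" using min by simp
    then show "eventually P U"
      using eventually_inf_principal[of P U "{x. P x}"] by simp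
  qed
  then show ?thesis using U unfolding ultrafilter_def by blast
qed

section \<open>Ultrapowers and the theorem of Los\<close>

lemma choice_default:
  assumes "A \<noteq> {}"
  shows "\<exists>f. \<forall>j. f j \<in> A \<and> ((\<exists>d\<in>A. P j d) \<longrightarrow> P j (f j))"
proof -
  have "\<forall>j. \<exists>d. d \<in> A \<and> ((\<exists>d\<in>A. P j d) \<longrightarrow> P j d)" using assms by blast
  then show ?thesis by (rule choice)
qed

definition pattern_realized ::
  "('f, 'r, 'a) struct \<Rightarrow> ('f, 'r) fm \<Rightarrow> nat list \<Rightarrow> nat list \<Rightarrow> ('a list \<times> bool) set \<Rightarrow> bool" where
  "pattern_realized M p xs ys Z \<longleftrightarrow>
     (\<exists>a. tuple_in M (length xs) a \<and> (\<forall>(b, \<delta>)\<in>Z. holds M p xs ys a b = \<delta>))"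

locale ultrapower =
  fixes U :: "'i filter" and fa :: "'f \<Rightarrow> nat" and K :: "('f, 'r, 'a) struct"
  assumes ultrafilter: "ultrafilter U" and K_struct: "is_struct fa K"
begin

lemma U_proper: "U \<noteq> bot"
  using ultrafilter unfolding ultrafilter_def by simp

lemma eventually_Not: "eventually (\<lambda>j. \<not> P j) U \<longleftrightarrow> \<not> eventually P U"
proof
  assume "eventually (\<lambda>j. \<not> P j) U"
  moreover have "\<not> eventually (\<lambda>j. False) U" using U_proper by (simp add: eventually_False)
  ultimately show "\<not> eventually P U" by (auto dest: eventually_conj)
qed (use ultrafilter in \<open>auto simp: ultrafilter_def\<close>)

lemma eventually_eq_const: "eventually (\<lambda>j. P j = \<delta>) U \<longleftrightarrow> (eventually P U \<longleftrightarrow> \<delta>)"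
  using eventually_Not[of P] by (cases \<delta>) auto

lemma univ_K_nonempty: "univ K \<noteq> {}"
  using K_struct unfolding is_struct_def by simp

definition ueq :: "('i \<Rightarrow> 'a) \<Rightarrow> ('i \<Rightarrow> 'a) \<Rightarrow> bool" where
  "ueq f g \<longleftrightarrow> eventually (\<lambda>j. f j = g j) U"

definition rep :: "('i \<Rightarrow> 'a) \<Rightarrow> ('i \<Rightarrow> 'a)" where
  "rep f = (SOME g. ueq g f)"

text \<open>Elements of the ultrapower are canonical representatives of \<open>ueq\<close>-classes.\<close>

definition KU :: "('f, 'r, 'i \<Rightarrow> 'a) struct" where
  "KU = \<lparr>univ = rep ` {f. \<forall>j. f j \<in> univ K},
         fint = (\<lambda>F as. rep (\<lambda>j. fint K F (map (\<lambda>a. a j) as))),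
         rint = (\<lambda>R as. eventually (\<lambda>j. rint K R (map (\<lambda>a. a j) as)) U)\<rparr>"

lemma ueq_refl: "ueq f f"
  unfolding ueq_def by simp

lemma ueq_sym: "ueq f g \<Longrightarrow> ueq g f"
  unfolding ueq_def by (simp add: eq_commute)

lemma ueq_trans: "ueq f g \<Longrightarrow> ueq g h \<Longrightarrow> ueq f h"
  unfolding ueq_def by (auto elim: eventually_elim2)

lemma ueq_rep: "ueq (rep f) f"
  unfolding rep_def by (rule someI[of _ f]) (rule ueq_refl)

lemma rep_eq_iff: "rep f = rep g \<longleftrightarrow> ueq f g"
proof
  assume "ueq f g"
  then have "(\<lambda>h. ueq h f) = (\<lambda>h. ueq h g)"
    using ueq_trans ueq_sym by blast
  then show "rep f = rep g" unfolding rep_def by simp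
next
  assume "rep f = rep g"
  then have "ueq f (rep g)" using ueq_sym[OF ueq_rep[of f]] by simp
  then show "ueq f g" using ueq_rep by (rule ueq_trans)
qed

lemma rep_rep: "rep (rep f) = rep f"
  using rep_eq_iff ueq_rep by blast

lemma univ_KU: "univ KU = rep ` {f. \<forall>j. f j \<in> univ K}"
  and fint_KU: "fint KU F as = rep (\<lambda>j. fint K F (map (\<lambda>a. a j) as))"
  and rint_KU: "rint KU R as \<longleftrightarrow> eventually (\<lambda>j. rint K R (map (\<lambda>a. a j) as)) U"
  unfolding KU_def by simp_all

lemma rep_univ_KU: "x \<in> univ KU \<Longrightarrow> rep x = x"
  unfolding univ_KU using rep_rep by auto

lemma eventually_in_univ_K: "x \<in> univ KU \<Longrightarrow> eventually (\<lambda>j. x j \<in> univ K) U"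
proof -
  assume "x \<in> univ KU"
  then obtain f where f: "\<forall>j. f j \<in> univ K" "x = rep f" unfolding univ_KU by auto
  then show ?thesis
    using ueq_rep[of f] unfolding ueq_def by (auto elim: eventually_mono)
qed

lemma rep_in_univ_KU:
  assumes "eventually (\<lambda>j. x j \<in> univ K) U"
  shows "rep x \<in> univ KU"
proof -
  obtain d where d: "d \<in> univ K" using univ_K_nonempty by blast
  define f where "f j = (if x j \<in> univ K then x j else d)" for j
  have "ueq f x"
    using assms unfolding ueq_def f_def by (auto elim: eventually_mono)
  then have "rep x = rep f" using rep_eq_iff ueq_sym by blast
  moreover have "\<forall>j. f j \<in> univ K" using d by (simp add: f_def)
  ultimately show ?thesis unfolding univ_KU by blast
qed

lemma eval_KU_rep: "(\<And>v. rep (e v) = e v) \<Longrightarrow> rep (eval KU e t) = eval KU e t"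
  by (cases t) (simp_all add: fint_KU rep_rep)

lemma eval_los: "ueq (eval KU e t) (\<lambda>j. eval K (\<lambda>v. e v j) t)"
proof (induction t)
  case (Var n) then show ?case by (simp add: ueq_refl)
next
  case (Fn F ts)
  have "eventually (\<lambda>j. \<forall>t\<in>set ts. eval KU e t j = eval K (\<lambda>v. e v j) t) U"
    using Fn unfolding ueq_def by (intro eventually_ball_finite) auto
  then have "eventually (\<lambda>j. map (\<lambda>a. a j) (map (eval KU e) ts) = map (eval K (\<lambda>v. e v j)) ts) U"
    by (rule eventually_mono) simp
  then have "ueq (\<lambda>j. fint K F (map (\<lambda>a. a j) (map (eval KU e) ts))) (\<lambda>j. eval K (\<lambda>v. e v j) (Fn F ts))"
    unfolding ueq_def by (rule eventually_mono) (simp only: eval.simps)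
  then show ?case by (simp add: fint_KU ueq_trans[OF ueq_rep])
qed

lemma eventually_map_eval:
  "eventually (\<lambda>j. map (\<lambda>a. a j) (map (eval KU e) ts) = map (eval K (\<lambda>v. e v j)) ts) U"
proof -
  have "eventually (\<lambda>j. \<forall>t\<in>set ts. eval KU e t j = eval K (\<lambda>v. e v j) t) U"
    using eval_los unfolding ueq_def by (intro eventually_ball_finite) auto
  then show ?thesis by (rule eventually_mono) simp
qed

lemma sat_los: "(\<And>v. rep (e v) = e v) \<Longrightarrow> sat KU e p \<longleftrightarrow> eventually (\<lambda>j. sat K (\<lambda>v. e v j) p) U"
proof (induction p arbitrary: e)
  case FF then show ?case using U_proper by simp
next
  case (Eq s t)
  have "sat KU e (Eq s t) \<longleftrightarrow> rep (eval KU e s) = rep (eval KU e t)"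
    using eval_KU_rep[OF Eq.prems] by simp
  also have "\<dots> \<longleftrightarrow> eventually (\<lambda>j. eval KU e s j = eval KU e t j) U"
    unfolding rep_eq_iff ueq_def ..
  also have "\<dots> \<longleftrightarrow> eventually (\<lambda>j. eval K (\<lambda>v. e v j) s = eval K (\<lambda>v. e v j) t) U"
    using eval_los[of e s] eval_los[of e t] unfolding ueq_def
    by (intro eventually_subst) (auto elim: eventually_elim2)
  finally show ?case by simp
next
  case (Rel R ts)
  have "eventually (\<lambda>j. rint K R (map (\<lambda>a. a j) (map (eval KU e) ts)) = rint K R (map (eval K (\<lambda>v. e v j)) ts)) U"
    using eventually_map_eval[of e ts] by (rule eventually_mono) (erule arg_cong)
  then show ?case unfolding sat.simps rint_KU by (rule eventually_subst)
next
  case (Neg p)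
  then show ?case using eventually_Not by simp
next
  case (Conj p q)
  then show ?case by (simp add: eventually_conj_iff)
next
  case (Ex x p)
  have IH: "sat KU (e(x := d)) p \<longleftrightarrow> eventually (\<lambda>j. sat K ((\<lambda>v. e v j)(x := d j)) p) U"
    if "d \<in> univ KU" for d
  proof -
    have "sat KU (e(x := d)) p \<longleftrightarrow> eventually (\<lambda>j. sat K (\<lambda>v. (e(x := d)) v j) p) U"
      using Ex.prems rep_univ_KU[OF that] by (intro Ex.IH) simp
    moreover have "(\<lambda>v. (e(x := d)) v j) = (\<lambda>v. e v j)(x := d j)" for j by auto
    ultimately show ?thesis by (simp only:)
  qed
  show ?case
  proof
    assume "sat KU e (Ex x p)"
    then obtain d where d: "d \<in> univ KU" "sat KU (e(x := d)) p" by auto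
    show "eventually (\<lambda>j. sat K (\<lambda>v. e v j) (Ex x p)) U"
      using eventually_in_univ_K[OF d(1)] IH[OF d(1)] d(2) by (auto elim: eventually_elim2)
  next
    assume ex: "eventually (\<lambda>j. sat K (\<lambda>v. e v j) (Ex x p)) U"
    from choice_default[OF univ_K_nonempty, of "\<lambda>j d. sat K ((\<lambda>v. e v j)(x := d)) p"]
    obtain f where f: "\<And>j. f j \<in> univ K"
      and sat_f: "\<And>j. (\<exists>d\<in>univ K. sat K ((\<lambda>v. e v j)(x := d)) p) \<Longrightarrow> sat K ((\<lambda>v. e v j)(x := f j)) p"
      by blast
    have d: "rep f \<in> univ KU" unfolding univ_KU using f by blast
    have "eventually (\<lambda>j. sat K ((\<lambda>v. e v j)(x := rep f j)) p) U"
      using ex ueq_rep[of f] unfolding ueq_def sat.simps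
      by (rule eventually_elim2) (simp add: sat_f)
    then show "sat KU e (Ex x p)" using IH[OF d] d by auto
  qed
qed

lemma KU_struct: "is_struct fa KU"
  unfolding is_struct_def
proof (intro conjI allI impI)
  obtain d where "d \<in> univ K" using univ_K_nonempty by blast
  then have "rep (\<lambda>j. d) \<in> univ KU" unfolding univ_KU by blast
  then show "univ KU \<noteq> {}" by blast
next
  fix F as assume as: "length as = fa F \<and> set as \<subseteq> univ KU"
  have "eventually (\<lambda>j. \<forall>a\<in>set as. a j \<in> univ K) U"
    using as eventually_in_univ_K by (intro eventually_ball_finite) auto
  then have "eventually (\<lambda>j. fint K F (map (\<lambda>a. a j) as) \<in> univ K) U"
    by (rule eventually_mono) (use as in \<open>auto intro!: is_struct_fint[OF K_struct]\<close>)
  then show "fint KU F as \<in> univ KU" unfolding fint_KU by (rule rep_in_univ_KU)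
qed

lemma KU_model:
  assumes "is_model fa T K" "\<forall>\<sigma>\<in>T. sentence fa ra \<sigma>"
  shows "is_model fa T KU"
  unfolding is_model_def
proof (intro conjI ballI allI impI KU_struct)
  fix \<sigma> and e :: "nat \<Rightarrow> 'i \<Rightarrow> 'a" assume \<sigma>: "\<sigma> \<in> T" and e: "range e \<subseteq> univ KU"
  obtain d where d: "d \<in> univ K" using univ_K_nonempty by blast
  have "fv \<sigma> = {}" using assms(2) \<sigma> unfolding sentence_def by blast
  then have "sat K (\<lambda>v. e v j) \<sigma> \<longleftrightarrow> sat K (\<lambda>_. d) \<sigma>" for j by (intro sat_cong) simp
  moreover have "sat K (\<lambda>_. d) \<sigma>" using assms(1) \<sigma> d unfolding is_model_def by auto
  moreover have "rep (e v) = e v" for v using e rep_univ_KU by blast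
  ultimately show "sat KU e \<sigma>" using sat_los by simp
qed

definition glue :: "nat \<Rightarrow> ('i \<Rightarrow> 'a list) \<Rightarrow> ('i \<Rightarrow> 'a) list" where
  "glue m y = map (\<lambda>l. rep (\<lambda>j. y j ! l)) [0..<m]"

lemma eventually_glue:
  assumes "\<And>j. length (y j) = m"
  shows "eventually (\<lambda>j. map (\<lambda>a. a j) (glue m y) = y j) U"
proof -
  have "eventually (\<lambda>j. \<forall>l\<in>{..<m}. rep (\<lambda>j. y j ! l) j = y j ! l) U"
    using ueq_rep unfolding ueq_def by (intro eventually_ball_finite) auto
  then show ?thesis
    by (rule eventually_mono) (auto simp: glue_def assms intro: nth_equalityI)
qed

lemma tuple_in_glue:
  assumes "\<And>j. tuple_in K m (y j)"
  shows "tuple_in KU m (glue m y)"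
proof -
  have "y j ! l \<in> univ K" if "l < m" for j l
    using assms[of j] that unfolding tuple_in_def by auto
  then have "rep (\<lambda>j. y j ! l) \<in> univ KU" if "l < m" for l
    using that by (intro rep_in_univ_KU) simp
  then show ?thesis unfolding tuple_in_def glue_def by auto
qed

lemma eventually_tuple_in:
  assumes "tuple_in KU m a"
  shows "eventually (\<lambda>j. tuple_in K m (map (\<lambda>x. x j) a)) U"
proof -
  have "eventually (\<lambda>j. \<forall>x\<in>set a. x j \<in> univ K) U"
    using assms eventually_in_univ_K unfolding tuple_in_def by (intro eventually_ball_finite) auto
  then show ?thesis
    by (rule eventually_mono) (use assms in \<open>auto simp: tuple_in_def\<close>)
qed

lemma holds_los:
  assumes a: "tuple_in KU (length xs) a" and b: "tuple_in KU (length ys) b"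
    and fv: "fv p \<subseteq> set xs \<union> set ys"
  shows "holds KU p xs ys a b \<longleftrightarrow>
    eventually (\<lambda>j. holds K p xs ys (map (\<lambda>x. x j) a) (map (\<lambda>x. x j) b)) U"
proof -
  define d where "d = (\<lambda>_::nat. SOME d. d \<in> univ KU)"
  define E where "E = upd_list (upd_list d ys b) xs a"
  have "E v \<in> univ KU" for v
    using a b holds_env_in_univ[OF KU_struct] unfolding E_def d_def tuple_in_def by blast
  then have rep: "rep (E v) = E v" for v by (rule rep_univ_KU)
  have proj: "(\<lambda>v. E v j) = upd_list (upd_list (\<lambda>v. d v j) ys (map (\<lambda>x. x j) b)) xs (map (\<lambda>x. x j) a)"
    for j unfolding E_def by (intro ext) (simp add: upd_list_map[where f="\<lambda>x. x j"])
  have "holds KU p xs ys a b \<longleftrightarrow> sat KU E p" unfolding holds_def E_def d_def ..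
  also have "\<dots> \<longleftrightarrow> eventually (\<lambda>j. sat K (\<lambda>v. E v j) p) U" using sat_los rep by blast
  also have "\<dots> \<longleftrightarrow> eventually (\<lambda>j. holds K p xs ys (map (\<lambda>x. x j) a) (map (\<lambda>x. x j) b)) U"
  proof (rule eventually_subst[OF always_eventually], intro allI)
    fix j
    show "sat K (\<lambda>v. E v j) p = holds K p xs ys (map (\<lambda>x. x j) a) (map (\<lambda>x. x j) b)"
      unfolding proj using a b fv by (intro holds_iff_sat[symmetric]) (auto simp: tuple_in_def)
  qed
  finally show ?thesis .
qed

lemma glue_choice:
  assumes "eventually (\<lambda>j. \<exists>y. tuple_in K m y \<and> P j y) U"
  obtains y where "tuple_in KU m y" "eventually (\<lambda>j. P j (map (\<lambda>x. x j) y)) U"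
proof -
  have "{y. tuple_in K m y} \<noteq> {}"
    using replicate_tuple_in[of _ K m] univ_K_nonempty by auto
  from choice_default[OF this, of P] obtain yj where yj: "\<forall>j. yj j \<in> {y. tuple_in K m y} \<and>
      ((\<exists>y\<in>{y. tuple_in K m y}. P j y) \<longrightarrow> P j (yj j))" ..
  then have "tuple_in KU m (glue m yj)" by (intro tuple_in_glue) blast
  moreover have "eventually (\<lambda>j. map (\<lambda>x. x j) (glue m yj) = yj j) U"
    using yj by (intro eventually_glue) (simp add: tuple_in_def)
  with assms have "eventually (\<lambda>j. P j (map (\<lambda>x. x j) (glue m yj))) U"
    by (rule eventually_elim2) (use yj in auto)
  ultimately show ?thesis by (rule that)
qed

lemma eventually_pattern_realized:
  assumes fv: "fv p \<subseteq> set xs \<union> set ys" and Z: "finite Z" "\<forall>(b, \<delta>)\<in>Z. tuple_in KU (length ys) b"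
    and pat: "pattern_realized KU p xs ys Z"
  shows "eventually (\<lambda>j. pattern_realized K p xs ys ((\<lambda>(b, \<delta>). (map (\<lambda>x. x j) b, \<delta>)) ` Z)) U"
proof -
  from pat obtain a where a: "tuple_in KU (length xs) a" and ha: "\<forall>(b, \<delta>)\<in>Z. holds KU p xs ys a b = \<delta>"
    unfolding pattern_realized_def by blast
  have "eventually (\<lambda>j. holds K p xs ys (map (\<lambda>x. x j) a) (map (\<lambda>x. x j) b) = \<delta>) U"
    if "(b, \<delta>) \<in> Z" for b \<delta>
  proof -
    have "tuple_in KU (length ys) b" using Z(2) that by auto
    then have "holds KU p xs ys a b \<longleftrightarrow>
        eventually (\<lambda>j. holds K p xs ys (map (\<lambda>x. x j) a) (map (\<lambda>x. x j) b)) U"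
      by (rule holds_los[OF a _ fv])
    then show ?thesis using ha that unfolding eventually_eq_const by auto
  qed
  then have "eventually (\<lambda>j. \<forall>z\<in>Z. holds K p xs ys (map (\<lambda>x. x j) a) (map (\<lambda>x. x j) (fst z)) = snd z) U"
    using Z(1) by (intro eventually_ball_finite) auto
  with eventually_tuple_in[OF a] show ?thesis
  proof (rule eventually_elim2)
    fix j
    assume "tuple_in K (length xs) (map (\<lambda>x. x j) a)"
      and "\<forall>z\<in>Z. holds K p xs ys (map (\<lambda>x. x j) a) (map (\<lambda>x. x j) (fst z)) = snd z"
    then show "pattern_realized K p xs ys ((\<lambda>(b, \<delta>). (map (\<lambda>x. x j) b, \<delta>)) ` Z)"
      unfolding pattern_realized_def by (intro exI[of _ "map (\<lambda>x. x j) a"]) auto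
  qed
qed

lemma pattern_realized_KU:
  assumes fv: "fv p \<subseteq> set xs \<union> set ys" and Z: "\<forall>(b, \<delta>)\<in>Z. tuple_in KU (length ys) b"
    and ev: "eventually (\<lambda>j. pattern_realized K p xs ys ((\<lambda>(b, \<delta>). (map (\<lambda>x. x j) b, \<delta>)) ` Z)) U"
  shows "pattern_realized KU p xs ys Z"
proof -
  from ev have "eventually (\<lambda>j. \<exists>a. tuple_in K (length xs) a \<and>
      (\<forall>(b, \<delta>)\<in>Z. holds K p xs ys a (map (\<lambda>x. x j) b) = \<delta>)) U"
    unfolding pattern_realized_def by (rule eventually_mono) auto
  then obtain a where a: "tuple_in KU (length xs) a"
    and ha: "eventually (\<lambda>j. \<forall>(b, \<delta>)\<in>Z. holds K p xs ys (map (\<lambda>x. x j) a) (map (\<lambda>x. x j) b) = \<delta>) U"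
    by (rule glue_choice)
  have "holds KU p xs ys a b = \<delta>" if b\<delta>: "(b, \<delta>) \<in> Z" for b \<delta>
  proof -
    have b: "tuple_in KU (length ys) b" using Z b\<delta> by auto
    have "eventually (\<lambda>j. holds K p xs ys (map (\<lambda>x. x j) a) (map (\<lambda>x. x j) b) = \<delta>) U"
      using ha by (rule eventually_mono) (use b\<delta> in auto)
    then show ?thesis unfolding eventually_eq_const holds_los[OF a b fv] .
  qed
  then show ?thesis unfolding pattern_realized_def using a by blast
qed

lemma pattern_los:
  assumes "fv p \<subseteq> set xs \<union> set ys" "finite Z" "\<forall>(b, \<delta>)\<in>Z. tuple_in KU (length ys) b"
  shows "pattern_realized KU p xs ys Z \<longleftrightarrow>
    eventually (\<lambda>j. pattern_realized K p xs ys ((\<lambda>(b, \<delta>). (map (\<lambda>x. x j) b, \<delta>)) ` Z)) U"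
  using eventually_pattern_realized[OF assms] pattern_realized_KU[OF assms(1,3)] by blast

end

section \<open>Countable saturation\<close>

locale nonprincipal_ultrapower = ultrapower U fa K
  for U :: "nat filter" and fa :: "'f \<Rightarrow> nat" and K :: "('f, 'r, 'a) struct" +
  assumes nonprincipal: "U \<le> sequentially"
begin

lemma eventually_ge: "eventually (\<lambda>j. n \<le> j) U"
  using nonprincipal by (rule filter_leD) (simp add: eventually_ge_at_top)

lemma eventually_notin_finite: "finite D \<Longrightarrow> eventually (\<lambda>j. j \<notin> D) U"
  using nonprincipal by (rule filter_leD) (simp add: cofinite_eq_sequentially[symmetric] eventually_cofinite)

definition internal :: "nat \<Rightarrow> ((nat \<Rightarrow> 'a) list \<Rightarrow> bool) \<Rightarrow> bool" where
  "internal m Q \<longleftrightarrow>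
     (\<exists>QK. \<forall>y. tuple_in KU m y \<longrightarrow> (Q y \<longleftrightarrow> eventually (\<lambda>j. QK j (map (\<lambda>x. x j) y)) U))"

lemma internal_Not:
  assumes "internal m Q"
  shows "internal m (\<lambda>y. \<not> Q y)"
proof -
  from assms obtain QK where "\<forall>y. tuple_in KU m y \<longrightarrow> (Q y \<longleftrightarrow> eventually (\<lambda>j. QK j (map (\<lambda>x. x j) y)) U)"
    unfolding internal_def ..
  then show ?thesis
    unfolding internal_def by (intro exI[of _ "\<lambda>j y. \<not> QK j y"]) (simp add: eventually_Not)
qed

lemma countably_saturated:
  fixes Q :: "nat \<Rightarrow> (nat \<Rightarrow> 'a) list \<Rightarrow> bool"
  assumes internal: "\<And>k. internal m (Q k)" and fin: "\<And>n. \<exists>y. tuple_in KU m y \<and> (\<forall>k<n. Q k y)"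
  shows "\<exists>y. tuple_in KU m y \<and> (\<forall>k. Q k y)"
proof -
  have "\<forall>k. \<exists>QK. \<forall>y. tuple_in KU m y \<longrightarrow> (Q k y \<longleftrightarrow> eventually (\<lambda>j. QK j (map (\<lambda>x. x j) y)) U)"
    using internal unfolding internal_def by blast
  from choice[OF this] obtain QK where QK: "\<And>k y. tuple_in KU m y \<Longrightarrow>
      Q k y \<longleftrightarrow> eventually (\<lambda>j. QK k j (map (\<lambda>x. x j) y)) U"
    by blast
  define A where "A n = {j. \<exists>y. tuple_in K m y \<and> (\<forall>k<n. QK k j y)}" for n
  have A: "eventually (\<lambda>j. j \<in> A n) U" for n
  proof -
    obtain y where y: "tuple_in KU m y" "\<forall>k<n. Q k y" using fin by blast
    have "eventually (\<lambda>j. \<forall>k\<in>{..<n}. QK k j (map (\<lambda>x. x j) y)) U"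
      using y QK by (intro eventually_ball_finite) auto
    with eventually_tuple_in[OF y(1)] show ?thesis
      unfolding A_def by (rule eventually_elim2) auto
  qed
  obtain d where "d \<in> univ K" using univ_K_nonempty by blast
  then have A0: "j \<in> A 0" for j unfolding A_def using replicate_tuple_in[of d K m] by auto
  define mj where "mj j = (GREATEST n. n \<le> j \<and> j \<in> A n)" for j
  have mj: "j \<in> A (mj j)" for j
  proof -
    have "mj j \<le> j \<and> j \<in> A (mj j)"
      unfolding mj_def by (rule GreatestI_nat[of _ 0 j]) (use A0 in auto)
    then show ?thesis ..
  qed
  have mj_ge: "n \<le> mj j" if "n \<le> j" "j \<in> A n" for n j
    unfolding mj_def using that by (intro Greatest_le_nat[of _ n j]) auto
  text \<open>At coordinate \<open>j\<close>, satisfy as many of the first \<open>j\<close> conditions as possible.\<close>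
  have "eventually (\<lambda>j. \<exists>y. tuple_in K m y \<and> (\<forall>k<mj j. QK k j y)) U"
    using mj unfolding A_def by simp
  then obtain y where y: "tuple_in KU m y"
    and QK_y: "eventually (\<lambda>j. \<forall>k<mj j. QK k j (map (\<lambda>x. x j) y)) U"
    by (rule glue_choice)
  have "Q k y" for k
  proof -
    have "eventually (\<lambda>j. (\<forall>k<mj j. QK k j (map (\<lambda>x. x j) y)) \<and> j \<in> A (Suc k) \<and> Suc k \<le> j) U"
      using QK_y A eventually_ge by (intro eventually_conj)
    then have "eventually (\<lambda>j. QK k j (map (\<lambda>x. x j) y)) U"
    proof (rule eventually_mono)
      fix j assume j: "(\<forall>k<mj j. QK k j (map (\<lambda>x. x j) y)) \<and> j \<in> A (Suc k) \<and> Suc k \<le> j"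
      then have "k < mj j" using mj_ge[of "Suc k" j] by simp
      then show "QK k j (map (\<lambda>x. x j) y)" using j by blast
    qed
    then show ?thesis using QK[OF y] by blast
  qed
  then show ?thesis using y by blast
qed

lemma realize_limit_type:
  assumes "countable \<Q>" and "\<And>Q. Q \<in> \<Q> \<Longrightarrow> internal m Q"
    and "\<And>i. tuple_in KU m (c i)" and "\<And>Q. Q \<in> \<Q> \<Longrightarrow> eventually (\<lambda>i. Q (c i)) U"
  shows "\<exists>y. tuple_in KU m y \<and> (\<forall>Q\<in>\<Q>. Q y)"
proof (cases "\<Q> = {}")
  case True then show ?thesis using assms(3) by blast
next
  case False
  define Q where "Q k = from_nat_into \<Q> k" for k
  have Q: "Q k \<in> \<Q>" for k unfolding Q_def using False by (rule from_nat_into)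
  have "internal m (Q k)" for k using Q assms(2) by blast
  moreover have "\<exists>y. tuple_in KU m y \<and> (\<forall>k<n. Q k y)" for n
  proof -
    have "eventually (\<lambda>i. \<forall>k\<in>{..<n}. Q k (c i)) U"
      using Q assms(4) by (intro eventually_ball_finite) auto
    from eventually_happens'[OF U_proper this] obtain i where "\<forall>k<n. Q k (c i)" by auto
    then show ?thesis using assms(3) by blast
  qed
  ultimately obtain y where "tuple_in KU m y" "\<forall>k. Q k y"
    using countably_saturated by blast
  moreover have "P \<in> \<Q> \<Longrightarrow> \<exists>k. Q k = P" for P
    unfolding Q_def using from_nat_into_surj[OF assms(1)] .
  ultimately show ?thesis by blast
qed

end

section \<open>Countable elementary substructures\<close>

definition restrict_struct :: "('f, 'r, 'a) struct \<Rightarrow> 'a set \<Rightarrow> ('f, 'r, 'a) struct" where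
  "restrict_struct M A = M\<lparr>univ := A\<rparr>"

definition list_env :: "('f, 'r, 'a) struct \<Rightarrow> 'a list \<Rightarrow> nat \<Rightarrow> 'a" where
  "list_env M as v = (if v < length as then as ! v else SOME d. d \<in> univ M)"

definition skolem_witness :: "('f, 'r, 'a) struct \<Rightarrow> ('f, 'r) fm \<Rightarrow> nat \<Rightarrow> 'a list \<Rightarrow> 'a" where
  "skolem_witness M p x as = (SOME d. d \<in> univ M \<and>
     ((\<exists>d'\<in>univ M. sat M ((list_env M as)(x := d')) p) \<longrightarrow> sat M ((list_env M as)(x := d)) p))"

definition skolem_step :: "('f \<Rightarrow> nat) \<Rightarrow> ('f, 'r, 'a) struct \<Rightarrow> 'a set \<Rightarrow> 'a set" where
  "skolem_step fa M S = S \<union> (\<lambda>(p, x, as). skolem_witness M p x as) ` (UNIV \<times> UNIV \<times> lists S)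
     \<union> (\<lambda>(F, as). fint M F as) ` {(F, as). set as \<subseteq> S \<and> length as = fa F}"

lemma skolem_witness:
  assumes "is_struct fa M"
  shows "skolem_witness M p x as \<in> univ M"
    and "d \<in> univ M \<Longrightarrow> sat M ((list_env M as)(x := d)) p \<Longrightarrow>
      sat M ((list_env M as)(x := skolem_witness M p x as)) p"
proof -
  have "univ M \<noteq> {}" using assms unfolding is_struct_def by simp
  then have "\<exists>d. d \<in> univ M \<and>
      ((\<exists>d'\<in>univ M. sat M ((list_env M as)(x := d')) p) \<longrightarrow> sat M ((list_env M as)(x := d)) p)"
    by blast
  from someI_ex[OF this] show "skolem_witness M p x as \<in> univ M"
    and "d \<in> univ M \<Longrightarrow> sat M ((list_env M as)(x := d)) p \<Longrightarrow>
      sat M ((list_env M as)(x := skolem_witness M p x as)) p"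
    unfolding skolem_witness_def by blast+
qed

lemma countable_skolem_step:
  fixes M :: "('f::countable, 'r::countable, 'a) struct"
  assumes "countable S"
  shows "countable (skolem_step fa M S)"
proof -
  have "countable (UNIV \<times> UNIV \<times> lists S :: (('f, 'r) fm \<times> nat \<times> 'a list) set)"
    using assms by simp
  moreover have "countable {(F, as). set as \<subseteq> S \<and> length as = fa F}"
    by (rule countable_subset[of _ "UNIV \<times> lists S"]) (use assms in auto)
  ultimately show ?thesis
    unfolding skolem_step_def using assms by (intro countable_Un countable_image) auto
qed

lemma subset_skolem_step: "S \<subseteq> skolem_step fa M S"
  unfolding skolem_step_def by blast

lemma skolem_witness_in_step:
  assumes "set as \<subseteq> S"
  shows "skolem_witness M p x as \<in> skolem_step fa M S"
proof -
  have "(p, x, as) \<in> UNIV \<times> UNIV \<times> lists S" using assms by auto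
  then have "skolem_witness M p x as \<in> (\<lambda>(p, x, as). skolem_witness M p x as) ` (UNIV \<times> UNIV \<times> lists S)"
    by (rule rev_image_eqI) simp
  then show ?thesis unfolding skolem_step_def by blast
qed

lemma fint_in_skolem_step:
  assumes "set as \<subseteq> S" "length as = fa F"
  shows "fint M F as \<in> skolem_step fa M S"
proof -
  have "(F, as) \<in> {(F, as). set as \<subseteq> S \<and> length as = fa F}" using assms by simp
  then have "fint M F as \<in> (\<lambda>(F, as). fint M F as) ` {(F, as). set as \<subseteq> S \<and> length as = fa F}"
    by (rule rev_image_eqI) simp
  then show ?thesis unfolding skolem_step_def by blast
qed

lemma skolem_step_subset_univ:
  assumes "is_struct fa M" "S \<subseteq> univ M"
  shows "skolem_step fa M S \<subseteq> univ M"
  using assms skolem_witness(1)[OF assms(1)] is_struct_fint[OF assms(1)]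
  unfolding skolem_step_def by auto

locale skolem_chain =
  fixes fa :: "'f \<Rightarrow> nat" and M :: "('f, 'r, 'a) struct" and S :: "nat \<Rightarrow> 'a set"
  assumes M_struct: "is_struct fa M"
    and S_univ: "\<And>n. S n \<subseteq> univ M" and S_nonempty: "S 0 \<noteq> {}"
    and S_step: "\<And>n. skolem_step fa M (S n) \<subseteq> S (Suc n)"
begin

definition N :: "('f, 'r, 'a) struct" where
  "N = restrict_struct M (\<Union>n. S n)"

lemma N_simps [simp]: "univ N = (\<Union>n. S n)" "fint N = fint M" "rint N = rint M"
  unfolding N_def restrict_struct_def by simp_all

lemma S_mono: "m \<le> n \<Longrightarrow> S m \<subseteq> S n"
proof (rule lift_Suc_mono_le)
  show "S k \<subseteq> S (Suc k)" for k using subset_skolem_step S_step by (rule order_trans)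
qed

lemma finite_subset_stage: "finite F \<Longrightarrow> F \<subseteq> (\<Union>n. S n) \<Longrightarrow> \<exists>n. F \<subseteq> S n"
proof (induction F rule: finite_induct)
  case (insert x F)
  then obtain m n where "F \<subseteq> S m" "x \<in> S n" by blast
  then have "insert x F \<subseteq> S (max m n)" using S_mono[of m "max m n"] S_mono[of n "max m n"] by auto
  then show ?case by blast
qed simp

lemma N_struct: "is_struct fa N"
  unfolding is_struct_def
proof (intro conjI allI impI)
  show "univ N \<noteq> {}" using S_nonempty by auto
next
  fix F as assume as: "length as = fa F \<and> set as \<subseteq> univ N"
  then obtain n where "set as \<subseteq> S n" using finite_subset_stage[of "set as"] by auto
  then have "fint M F as \<in> S (Suc n)" using as by (intro subsetD[OF S_step fint_in_skolem_step]) auto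
  then show "fint N F as \<in> univ N" by auto
qed

lemma univ_N_subset: "univ N \<subseteq> univ M"
  using S_univ by auto

lemma eval_N: "eval N e t = eval M e t"
proof (induction t)
  case (Fn f ts)
  then have "map (eval N e) ts = map (eval M e) ts" by simp
  then show ?case by (simp only: eval.simps N_simps)
qed simp

text \<open>Tarski--Vaught test: a witness in \<open>M\<close> for a formula with parameters from \<open>S n\<close>
  can be replaced by a Skolem witness, which lies in \<open>S (Suc n)\<close>.\<close>

lemma witness_in_N:
  assumes e: "range e \<subseteq> univ N" and d: "d \<in> univ M" and sat: "sat M (e(x := d)) p"
  shows "\<exists>d'\<in>univ N. sat M (e(x := d')) p"
proof -
  obtain m where m: "fv p \<subseteq> {..<m}" using finite_fv finite_nat_bounded by blast
  define as where "as = map e [0..<m]"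
  have agree: "sat M ((list_env M as)(x := d')) p \<longleftrightarrow> sat M (e(x := d')) p" for d'
    by (rule sat_cong) (use m in \<open>auto simp: list_env_def as_def\<close>)
  have "set as \<subseteq> (\<Union>n. S n)" using e unfolding as_def by auto
  then obtain n where "set as \<subseteq> S n" using finite_subset_stage[of "set as"] by auto
  then have "skolem_witness M p x as \<in> S (Suc n)"
    by (rule subsetD[OF S_step skolem_witness_in_step])
  moreover have "sat M ((list_env M as)(x := skolem_witness M p x as)) p"
    using sat agree by (intro skolem_witness(2)[OF M_struct d]) simp
  then have "sat M (e(x := skolem_witness M p x as)) p" using agree by simp
  ultimately show ?thesis by auto
qed

lemma sat_N: "range e \<subseteq> univ N \<Longrightarrow> sat N e p \<longleftrightarrow> sat M e p"
proof (induction p arbitrary: e)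
  case (Eq s t) then show ?case by (simp add: eval_N)
next
  case (Rel R ts)
  have "map (eval N e) ts = map (eval M e) ts" by (simp add: eval_N)
  then show ?case by (simp only: sat.simps N_simps)
next
  case (Ex x p)
  have IH: "d \<in> univ N \<Longrightarrow> sat N (e(x := d)) p \<longleftrightarrow> sat M (e(x := d)) p" for d
    using Ex.prems by (intro Ex.IH) auto
  show ?case
  proof
    assume "sat N e (Ex x p)"
    then obtain d where "d \<in> univ N" "sat N (e(x := d)) p" by auto
    then have "d \<in> univ M" "sat M (e(x := d)) p" using IH univ_N_subset by auto
    then show "sat M e (Ex x p)" by auto
  next
    assume "sat M e (Ex x p)"
    then obtain d where "d \<in> univ M" "sat M (e(x := d)) p" by auto
    then show "sat N e (Ex x p)" using witness_in_N[OF Ex.prems] IH by auto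
  qed
qed simp_all

lemma N_model:
  assumes "is_model fa T M"
  shows "is_model fa T N"
  unfolding is_model_def
proof (intro conjI ballI allI impI N_struct)
  fix \<sigma> and e :: "nat \<Rightarrow> 'a" assume "\<sigma> \<in> T" and e: "range e \<subseteq> univ N"
  then have "sat M e \<sigma>" using assms univ_N_subset unfolding is_model_def by blast
  then show "sat N e \<sigma>" using sat_N[OF e] by simp
qed

lemma holds_N:
  assumes "tuple_in N (length xs) a" "tuple_in N (length ys) b" "fv p \<subseteq> set xs \<union> set ys"
  shows "holds N p xs ys a b \<longleftrightarrow> holds M p xs ys a b"
proof -
  let ?E = "upd_list (upd_list (\<lambda>_. SOME d. d \<in> univ N) ys b) xs a"
  have "range ?E \<subseteq> univ N"
    using holds_env_in_univ[OF N_struct] assms(1,2) unfolding tuple_in_def by blast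
  then have "holds N p xs ys a b \<longleftrightarrow> sat M ?E p" unfolding holds_def by (rule sat_N)
  also have "\<dots> \<longleftrightarrow> holds M p xs ys a b"
    using assms unfolding tuple_in_def by (intro holds_iff_sat[symmetric]) auto
  finally show ?thesis .
qed

end

section \<open>Independence over a sequence, and copies along an injection\<close>

definition has_IP_over ::
  "('f, 'r, 'a) struct \<Rightarrow> ('f, 'r) fm \<Rightarrow> nat list \<Rightarrow> nat list \<Rightarrow> (nat \<Rightarrow> 'a list) \<Rightarrow> bool" where
  "has_IP_over M p xs ys b \<longleftrightarrow>
     (\<forall>n. tuple_in M (length ys) (b n)) \<and>
     (\<forall>A B. finite A \<and> finite B \<and> A \<inter> B = {} \<longrightarrow>
        (\<exists>a. tuple_in M (length xs) a \<and>
             (\<forall>n\<in>A. holds M p xs ys a (b n)) \<and> (\<forall>n\<in>B. \<not> holds M p xs ys a (b n))))"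

definition eventually_decided ::
  "('f, 'r, 'a) struct \<Rightarrow> ('f, 'r) fm \<Rightarrow> nat list \<Rightarrow> nat list \<Rightarrow> (nat \<Rightarrow> 'a list) \<Rightarrow> bool" where
  "eventually_decided M p xs ys b \<longleftrightarrow>
     (\<forall>a. tuple_in M (length xs) a \<longrightarrow>
        (\<exists>t\<in>{0::nat, 1}. finite {n. \<not> holds M (fm_pow p t) xs ys a (b n)}))"

lemma holds_fm_pow: "holds M (fm_pow p t) xs ys a b \<longleftrightarrow> (holds M p xs ys a b \<longleftrightarrow> t = 1)"
  unfolding fm_pow_def by (simp add: holds_Neg)

lemma wf_fm_pow: "wf_fm fa ra (fm_pow p t) = wf_fm fa ra p"
  and fv_fm_pow: "fv (fm_pow p t) = fv p"
  unfolding fm_pow_def by simp_all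

lemma eventually_decidedI:
  assumes "\<And>a. tuple_in M (length xs) a \<Longrightarrow>
    \<exists>\<delta>. eventually (\<lambda>n. holds M p xs ys a (b n) \<longleftrightarrow> \<delta>) sequentially"
  shows "eventually_decided M p xs ys b"
  unfolding eventually_decided_def
proof (intro allI impI)
  fix a assume "tuple_in M (length xs) a"
  then obtain \<delta> where "eventually (\<lambda>n. holds M p xs ys a (b n) \<longleftrightarrow> \<delta>) cofinite"
    using assms cofinite_eq_sequentially by auto
  then have fin: "finite {n. \<not> (holds M p xs ys a (b n) \<longleftrightarrow> \<delta>)}"
    unfolding eventually_cofinite .
  let ?t = "if \<delta> then 1 else 0 :: nat"
  have "{n. \<not> holds M (fm_pow p ?t) xs ys a (b n)} = {n. \<not> (holds M p xs ys a (b n) \<longleftrightarrow> \<delta>)}"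
    by (auto simp: holds_fm_pow)
  then show "\<exists>t\<in>{0::nat, 1}. finite {n. \<not> holds M (fm_pow p t) xs ys a (b n)}"
    using fin by (intro bexI[of _ ?t]) auto
qed

locale struct_image =
  fixes fa :: "'f \<Rightarrow> nat" and N :: "('f, 'r, 'b) struct" and h :: "'b \<Rightarrow> 'a"
  assumes N_struct: "is_struct fa N" and inj: "inj_on h (univ N)"
begin

definition g :: "'a \<Rightarrow> 'b" where
  "g = inv_into (univ N) h"

definition M :: "('f, 'r, 'a) struct" where
  "M = \<lparr>univ = h ` univ N, fint = (\<lambda>F as. h (fint N F (map g as))), rint = (\<lambda>R as. rint N R (map g as))\<rparr>"

lemma M_simps: "univ M = h ` univ N" "fint M F as = h (fint N F (map g as))" "rint M R as = rint N R (map g as)"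
  unfolding M_def by simp_all

lemma g_h: "x \<in> univ N \<Longrightarrow> g (h x) = x"
  unfolding g_def using inj by (rule inv_into_f_f)

lemma h_g: "y \<in> univ M \<Longrightarrow> h (g y) = y"
  unfolding g_def M_simps by (rule f_inv_into_f)

lemma map_g_h: "set a \<subseteq> univ N \<Longrightarrow> map g (map h a) = a"
  by (induction a) (auto simp: g_h)

lemma g_in_univ: "y \<in> univ M \<Longrightarrow> g y \<in> univ N"
  unfolding g_def M_simps by (rule inv_into_into)

lemma eval_image:
  assumes "wf_trm fa t" "range e \<subseteq> univ M"
  shows "eval N (\<lambda>v. g (e v)) t \<in> univ N \<and> eval M e t = h (eval N (\<lambda>v. g (e v)) t)"
  using assms(1)
proof (induction t)
  case (Var n)
  have "e n \<in> univ M" using assms(2) by auto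
  then show ?case using g_in_univ h_g by simp
next
  case (Fn f ts)
  then have IH: "eval N (\<lambda>v. g (e v)) t \<in> univ N" "eval M e t = h (eval N (\<lambda>v. g (e v)) t)"
    if "t \<in> set ts" for t
    using that by auto
  then have eq: "map g (map (eval M e) ts) = map (eval N (\<lambda>v. g (e v))) ts"
    by (simp add: g_h)
  have "eval N (\<lambda>v. g (e v)) (Fn f ts) \<in> univ N"
    using Fn.prems IH(1) by (auto intro!: is_struct_fint[OF N_struct])
  then show ?case unfolding eval.simps M_simps eq by simp
qed

lemma sat_image: "wf_fm fa ra p \<Longrightarrow> range e \<subseteq> univ M \<Longrightarrow> sat M e p \<longleftrightarrow> sat N (\<lambda>v. g (e v)) p"
proof (induction p arbitrary: e)
  case (Eq s t)
  then show ?case using eval_image[of s e] eval_image[of t e] inj by (auto dest: inj_onD)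
next
  case (Rel R ts)
  then have eq: "map g (map (eval M e) ts) = map (eval N (\<lambda>v. g (e v))) ts"
    using eval_image g_h by auto
  show ?case unfolding sat.simps M_simps eq ..
next
  case (Ex x p)
  have "sat M (e(x := h d)) p \<longleftrightarrow> sat N ((\<lambda>v. g (e v))(x := d)) p" if d: "d \<in> univ N" for d
  proof -
    have "range (e(x := h d)) \<subseteq> univ M" using Ex.prems d by (auto simp: M_simps)
    then have "sat M (e(x := h d)) p \<longleftrightarrow> sat N (\<lambda>v. g ((e(x := h d)) v)) p"
      using Ex.prems(1) by (intro Ex.IH) simp_all
    moreover have "(\<lambda>v. g ((e(x := h d)) v)) = (\<lambda>v. g (e v))(x := d)" using g_h[OF d] by auto
    ultimately show ?thesis by simp
  qed
  then show ?case by (auto simp: M_simps)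
qed simp_all

lemma M_struct: "is_struct fa M"
  unfolding is_struct_def
proof (intro conjI allI impI)
  show "univ M \<noteq> {}" using N_struct unfolding is_struct_def M_simps by simp
next
  fix F as assume as: "length as = fa F \<and> set as \<subseteq> univ M"
  then have "set (map g as) \<subseteq> univ N" using g_in_univ by auto
  then show "fint M F as \<in> univ M"
    unfolding M_simps using as is_struct_fint[OF N_struct] by auto
qed

lemma M_model:
  assumes "is_model fa T N" "\<forall>\<sigma>\<in>T. sentence fa ra \<sigma>"
  shows "is_model fa T M"
  unfolding is_model_def
proof (intro conjI ballI allI impI M_struct)
  fix \<sigma> and e :: "nat \<Rightarrow> 'a" assume \<sigma>: "\<sigma> \<in> T" and e: "range e \<subseteq> univ M"
  have "range (\<lambda>v. g (e v)) \<subseteq> univ N" using e g_in_univ by auto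
  then have "sat N (\<lambda>v. g (e v)) \<sigma>" using assms(1) \<sigma> unfolding is_model_def by blast
  moreover have "wf_fm fa ra \<sigma>" using assms(2) \<sigma> unfolding sentence_def by blast
  ultimately show "sat M e \<sigma>" using sat_image e by blast
qed

lemma tuple_in_image: "tuple_in N n a \<Longrightarrow> tuple_in M n (map h a)"
  unfolding tuple_in_def M_simps by auto

lemma tuple_in_preimage:
  assumes "tuple_in M n a"
  shows "tuple_in N n (map g a)" and "map h (map g a) = a"
proof -
  have a: "set a \<subseteq> univ M" using assms unfolding tuple_in_def by simp
  then show "tuple_in N n (map g a)" using assms g_in_univ unfolding tuple_in_def by auto
  show "map h (map g a) = a" unfolding map_map using a h_g by (intro map_idI) auto
qed

lemma holds_image:
  assumes wf: "wf_fm fa ra p" and fv: "fv p \<subseteq> set xs \<union> set ys"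
    and a: "tuple_in N (length xs) a" and b: "tuple_in N (length ys) b"
  shows "holds M p xs ys (map h a) (map h b) \<longleftrightarrow> holds N p xs ys a b"
proof -
  let ?E = "upd_list (upd_list (\<lambda>_. SOME d. d \<in> univ M) ys (map h b)) xs (map h a)"
  have E: "range ?E \<subseteq> univ M"
    using holds_env_in_univ[OF M_struct] tuple_in_image[OF a] tuple_in_image[OF b]
    unfolding tuple_in_def by blast
  have "map g (map h a) = a" "map g (map h b) = b"
    using a b map_g_h unfolding tuple_in_def by blast+
  then have gE: "(\<lambda>v. g (?E v)) = upd_list (upd_list (\<lambda>v. g (SOME d. d \<in> univ M)) ys b) xs a"
    by (simp add: upd_list_map[where f = g])
  have "holds M p xs ys (map h a) (map h b) \<longleftrightarrow> sat M ?E p" unfolding holds_def ..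
  also have "\<dots> \<longleftrightarrow> sat N (\<lambda>v. g (?E v)) p" using sat_image[OF wf E] .
  also have "\<dots> \<longleftrightarrow> holds N p xs ys a b"
    unfolding gE using a b fv by (intro holds_iff_sat[symmetric]) (auto simp: tuple_in_def)
  finally show ?thesis .
qed

lemma has_IP_over_image:
  assumes wf: "wf_fm fa ra p" and fv: "fv p \<subseteq> set xs \<union> set ys" and IP: "has_IP_over N p xs ys b"
  shows "has_IP_over M p xs ys (\<lambda>n. map h (b n))"
proof -
  have b: "\<And>n. tuple_in N (length ys) (b n)"
    and pattern: "\<And>A B. finite A \<Longrightarrow> finite B \<Longrightarrow> A \<inter> B = {} \<Longrightarrow> \<exists>a. tuple_in N (length xs) a \<and>
      (\<forall>n\<in>A. holds N p xs ys a (b n)) \<and> (\<forall>n\<in>B. \<not> holds N p xs ys a (b n))"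
    using IP unfolding has_IP_over_def by blast+
  have "\<exists>a. tuple_in M (length xs) a \<and> (\<forall>n\<in>A. holds M p xs ys a (map h (b n))) \<and>
      (\<forall>n\<in>B. \<not> holds M p xs ys a (map h (b n)))"
    if AB: "finite A" "finite B" "A \<inter> B = {}" for A B
  proof -
    obtain a where a: "tuple_in N (length xs) a"
      and a_AB: "\<forall>n\<in>A. holds N p xs ys a (b n)" "\<forall>n\<in>B. \<not> holds N p xs ys a (b n)"
      using pattern[OF AB] by blast
    have "holds M p xs ys (map h a) (map h (b n)) \<longleftrightarrow> holds N p xs ys a (b n)" for n
      by (rule holds_image[OF wf fv a b])
    then show ?thesis using a_AB tuple_in_image[OF a] by (intro exI[of _ "map h a"]) simp
  qed
  then show ?thesis unfolding has_IP_over_def using tuple_in_image[OF b] by blast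
qed

lemma eventually_decided_image:
  assumes wf: "wf_fm fa ra p" and fv: "fv p \<subseteq> set xs \<union> set ys"
    and b: "\<And>n. tuple_in N (length ys) (b n)" and dec: "eventually_decided N p xs ys b"
  shows "eventually_decided M p xs ys (\<lambda>n. map h (b n))"
  unfolding eventually_decided_def
proof (intro allI impI)
  fix a assume a: "tuple_in M (length xs) a"
  then obtain t where t: "t \<in> {0::nat, 1}" "finite {n. \<not> holds N (fm_pow p t) xs ys (map g a) (b n)}"
    using dec tuple_in_preimage(1) unfolding eventually_decided_def by blast
  have "holds M (fm_pow p t) xs ys (map h (map g a)) (map h (b n)) \<longleftrightarrow>
      holds N (fm_pow p t) xs ys (map g a) (b n)" for n
    using wf fv by (intro holds_image tuple_in_preimage(1)[OF a] b) (simp_all add: wf_fm_pow fv_fm_pow)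
  then have "holds M (fm_pow p t) xs ys a (map h (b n)) \<longleftrightarrow> holds N (fm_pow p t) xs ys (map g a) (b n)" for n
    using tuple_in_preimage(2)[OF a] by simp
  then show "\<exists>t\<in>{0::nat, 1}. finite {n. \<not> holds M (fm_pow p t) xs ys a (map h (b n))}"
    using t by auto
qed

end

definition labelled :: "(nat \<Rightarrow> 'b) \<Rightarrow> nat set \<Rightarrow> nat set \<Rightarrow> ('b \<times> bool) set" where
  "labelled f D A = (\<lambda>i. (f i, i \<in> A)) ` D"

definition tuples :: "'a set \<Rightarrow> nat \<Rightarrow> 'a list set" where
  "tuples S m = {a. set a \<subseteq> S \<and> length a = m}"

lemma countable_tuples: "countable S \<Longrightarrow> countable (tuples S m)"
  by (rule countable_subset[of _ "lists S"]) (auto simp: tuples_def)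

locale IP_ultrapower = nonprincipal_ultrapower U fa K
  for U :: "nat filter" and fa :: "'f::countable \<Rightarrow> nat" and K :: "('f, 'r::countable, 'a) struct" +
  fixes \<phi> :: "('f, 'r) fm" and xs ys :: "nat list"
  assumes fv_\<phi>: "fv \<phi> \<subseteq> set xs \<union> set ys" and IP: "has_IP_in K \<phi> xs ys"
begin

definition shattered :: "nat \<Rightarrow> nat \<Rightarrow> 'a list" where
  "shattered n = (SOME b. (\<forall>i<n. tuple_in K (length ys) (b i)) \<and>
     (\<forall>S \<subseteq> {..<n}. \<exists>a. tuple_in K (length xs) a \<and> (\<forall>i<n. holds K \<phi> xs ys a (b i) \<longleftrightarrow> i \<in> S)))"

lemma shattered:
  "\<forall>i<n. tuple_in K (length ys) (shattered n i)"
  "S \<subseteq> {..<n} \<Longrightarrow> \<exists>a. tuple_in K (length xs) a \<and> (\<forall>i<n. holds K \<phi> xs ys a (shattered n i) \<longleftrightarrow> i \<in> S)"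
proof -
  have "\<exists>b. (\<forall>i<n. tuple_in K (length ys) (b i)) \<and>
     (\<forall>S \<subseteq> {..<n}. \<exists>a. tuple_in K (length xs) a \<and> (\<forall>i<n. holds K \<phi> xs ys a (b i) \<longleftrightarrow> i \<in> S))"
    using IP unfolding has_IP_in_def by blast
  from someI_ex[OF this] show "\<forall>i<n. tuple_in K (length ys) (shattered n i)"
    and "S \<subseteq> {..<n} \<Longrightarrow> \<exists>a. tuple_in K (length xs) a \<and> (\<forall>i<n. holds K \<phi> xs ys a (shattered n i) \<longleftrightarrow> i \<in> S)"
    unfolding shattered_def by blast+
qed

text \<open>The \<open>i\<close>-th element of the shattered sequences of growing length, as an element of the
  ultrapower; the values at \<open>k \<le> i\<close> are irrelevant.\<close>

definition c :: "nat \<Rightarrow> (nat \<Rightarrow> 'a) list" where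
  "c i = glue (length ys) (\<lambda>k. if i < k then shattered k i else replicate (length ys) (SOME d. d \<in> univ K))"

lemma c_tuple: "tuple_in KU (length ys) (c i)"
  unfolding c_def using shattered(1) replicate_tuple_in some_in_univ[OF K_struct]
  by (intro tuple_in_glue) auto

lemma c_independent:
  assumes "finite D"
  shows "pattern_realized KU \<phi> xs ys (labelled c D A)"
proof -
  obtain m where m: "D \<subseteq> {..<m}" using assms finite_nat_bounded by blast
  have "eventually (\<lambda>k. \<forall>i\<in>D. map (\<lambda>x. x k) (c i) = shattered k i) U"
  proof (intro eventually_ball_finite[OF assms] ballI)
    fix i assume "i \<in> D"
    have "eventually (\<lambda>k. map (\<lambda>x. x k) (c i) = (if i < k then shattered k i else
        replicate (length ys) (SOME d. d \<in> univ K))) U"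
      unfolding c_def using shattered(1) by (intro eventually_glue) (auto simp: tuple_in_def)
    with eventually_ge[of "Suc i"] show "eventually (\<lambda>k. map (\<lambda>x. x k) (c i) = shattered k i) U"
      by (rule eventually_elim2) simp
  qed
  with eventually_ge[of m]
  have "eventually (\<lambda>k. pattern_realized K \<phi> xs ys
      ((\<lambda>(b, \<delta>). (map (\<lambda>x. x k) b, \<delta>)) ` labelled c D A)) U"
  proof (rule eventually_elim2)
    fix k assume k: "m \<le> k" and c: "\<forall>i\<in>D. map (\<lambda>x. x k) (c i) = shattered k i"
    obtain a where a: "tuple_in K (length xs) a"
      and ha: "\<forall>i<k. holds K \<phi> xs ys a (shattered k i) \<longleftrightarrow> i \<in> A \<inter> {..<k}"
      using shattered(2)[of "A \<inter> {..<k}" k] by blast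
    have "holds K \<phi> xs ys a (map (\<lambda>x. x k) (c i)) \<longleftrightarrow> i \<in> A" if "i \<in> D" for i
      using that m k ha c by auto
    then show "pattern_realized K \<phi> xs ys ((\<lambda>(b, \<delta>). (map (\<lambda>x. x k) b, \<delta>)) ` labelled c D A)"
      unfolding pattern_realized_def labelled_def using a by auto
  qed
  moreover have "finite (labelled c D A)" "\<forall>(b, \<delta>)\<in>labelled c D A. tuple_in KU (length ys) b"
    using assms c_tuple unfolding labelled_def by auto
  ultimately show ?thesis using pattern_los[OF fv_\<phi>] by blast
qed

definition patterns :: "(nat \<Rightarrow> 'a) set \<Rightarrow> ((nat \<Rightarrow> 'a) list \<times> bool) set set" where
  "patterns S = {Z. finite Z \<and> Z \<subseteq> tuples S (length ys) \<times> UNIV}"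

text \<open>Conditions on \<open>y\<close> with parameters from \<open>S\<close> that make up the limit type of the \<open>c i\<close>.\<close>

definition conditions :: "(nat \<Rightarrow> 'a) set \<Rightarrow> ((nat \<Rightarrow> 'a) list \<Rightarrow> bool) set" where
  "conditions S = (\<lambda>a y. holds KU \<phi> xs ys a y) ` tuples S (length xs)
     \<union> (\<lambda>a y. \<not> holds KU \<phi> xs ys a y) ` tuples S (length xs)
     \<union> (\<lambda>(Z, \<delta>) y. pattern_realized KU \<phi> xs ys (insert (y, \<delta>) Z)) ` (patterns S \<times> UNIV)"

lemma countable_patterns: "countable S \<Longrightarrow> countable (patterns S)"
  unfolding patterns_def by (intro countable_Collect_finite_subset countable_SIGMA countable_tuples) auto

lemma countable_conditions: "countable S \<Longrightarrow> countable (conditions S)"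
  unfolding conditions_def
  by (intro countable_Un countable_image countable_tuples countable_SIGMA countable_patterns) auto

lemma internal_holds:
  assumes "tuple_in KU (length xs) a"
  shows "internal (length ys) (\<lambda>y. holds KU \<phi> xs ys a y)"
  unfolding internal_def using holds_los[OF assms _ fv_\<phi>]
  by (intro exI[of _ "\<lambda>j y. holds K \<phi> xs ys (map (\<lambda>x. x j) a) y"]) simp

lemma internal_pattern:
  assumes "Z \<in> patterns S" "S \<subseteq> univ KU"
  shows "internal (length ys) (\<lambda>y. pattern_realized KU \<phi> xs ys (insert (y, \<delta>) Z))"
  unfolding internal_def
proof (intro exI[of _ "\<lambda>j y. pattern_realized K \<phi> xs ys
    (insert (y, \<delta>) ((\<lambda>(b, \<delta>). (map (\<lambda>x. x j) b, \<delta>)) ` Z))"] allI impI)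
  fix y assume "tuple_in KU (length ys) y"
  moreover have "finite Z" "\<forall>(b, \<delta>)\<in>Z. tuple_in KU (length ys) b"
    using assms unfolding patterns_def tuples_def tuple_in_def by auto
  ultimately show "pattern_realized KU \<phi> xs ys (insert (y, \<delta>) Z) \<longleftrightarrow> eventually (\<lambda>j. pattern_realized K \<phi> xs ys
      (insert (map (\<lambda>x. x j) y, \<delta>) ((\<lambda>(b, \<delta>). (map (\<lambda>x. x j) b, \<delta>)) ` Z))) U"
    using pattern_los[OF fv_\<phi>, of "insert (y, \<delta>) Z"] by simp
qed

lemma internal_conditions:
  assumes "S \<subseteq> univ KU" "Q \<in> conditions S"
  shows "internal (length ys) Q"
proof -
  have a: "tuple_in KU (length xs) a" if "a \<in> tuples S (length xs)" for a
    using that assms(1) unfolding tuples_def tuple_in_def by auto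
  from assms(2) consider
      (pos) a where "a \<in> tuples S (length xs)" "Q = (\<lambda>y. holds KU \<phi> xs ys a y)"
    | (neg) a where "a \<in> tuples S (length xs)" "Q = (\<lambda>y. \<not> holds KU \<phi> xs ys a y)"
    | (pattern) Z \<delta> where "Z \<in> patterns S" "Q = (\<lambda>y. pattern_realized KU \<phi> xs ys (insert (y, \<delta>) Z))"
    unfolding conditions_def by (elim UnE imageE SigmaE) force+
  then show ?thesis
  proof cases
    case pos then show ?thesis using internal_holds[OF a] by simp
  next
    case neg then show ?thesis using internal_Not[OF internal_holds[OF a]] by simp
  next
    case pattern then show ?thesis using internal_pattern[OF _ assms(1)] by simp
  qed
qed

definition limit_realizer :: "(nat \<Rightarrow> 'a) set \<Rightarrow> (nat \<Rightarrow> 'a) list" where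
  "limit_realizer S = (SOME y. tuple_in KU (length ys) y \<and>
     (\<forall>Q\<in>conditions S. eventually (\<lambda>i. Q (c i)) U \<longrightarrow> Q y))"

lemma limit_realizer:
  assumes "countable S" "S \<subseteq> univ KU"
  shows "tuple_in KU (length ys) (limit_realizer S)"
    and "Q \<in> conditions S \<Longrightarrow> eventually (\<lambda>i. Q (c i)) U \<Longrightarrow> Q (limit_realizer S)"
proof -
  let ?\<Q> = "{Q \<in> conditions S. eventually (\<lambda>i. Q (c i)) U}"
  have "countable ?\<Q>" using countable_conditions[OF assms(1)] by (rule countable_subset[rotated]) blast
  moreover have "internal (length ys) Q" if "Q \<in> ?\<Q>" for Q
    using that internal_conditions[OF assms(2)] by blast
  ultimately have "\<exists>y. tuple_in KU (length ys) y \<and> (\<forall>Q\<in>?\<Q>. Q y)"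
    using realize_limit_type[where c = c and m = "length ys" and \<Q> = ?\<Q>] c_tuple by blast
  then have "\<exists>y. tuple_in KU (length ys) y \<and> (\<forall>Q\<in>conditions S. eventually (\<lambda>i. Q (c i)) U \<longrightarrow> Q y)"
    by blast
  from someI_ex[OF this] show "tuple_in KU (length ys) (limit_realizer S)"
    and "Q \<in> conditions S \<Longrightarrow> eventually (\<lambda>i. Q (c i)) U \<Longrightarrow> Q (limit_realizer S)"
    unfolding limit_realizer_def by blast+
qed

definition pattern_witness :: "((nat \<Rightarrow> 'a) list \<times> bool) set \<Rightarrow> (nat \<Rightarrow> 'a) list" where
  "pattern_witness Z = (SOME a. tuple_in KU (length xs) a \<and> (\<forall>(b, \<delta>)\<in>Z. holds KU \<phi> xs ys a b = \<delta>))"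

lemma pattern_witness:
  "pattern_realized KU \<phi> xs ys Z \<Longrightarrow>
    tuple_in KU (length xs) (pattern_witness Z) \<and> (\<forall>(b, \<delta>)\<in>Z. holds KU \<phi> xs ys (pattern_witness Z) b = \<delta>)"
  unfolding pattern_realized_def pattern_witness_def by (rule someI_ex)

definition pattern_witnesses :: "(nat \<Rightarrow> 'a) set \<Rightarrow> (nat \<Rightarrow> 'a) set" where
  "pattern_witnesses S = (\<Union>Z\<in>{Z \<in> patterns S. pattern_realized KU \<phi> xs ys Z}. set (pattern_witness Z))"

lemma countable_pattern_witnesses:
  assumes "countable S"
  shows "countable (pattern_witnesses S)"
proof -
  have "countable {Z \<in> patterns S. pattern_realized KU \<phi> xs ys Z}"
    using countable_patterns[OF assms] by (rule countable_subset[rotated]) blast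
  then show ?thesis unfolding pattern_witnesses_def by (rule countable_UN) (auto intro: countable_finite)
qed

lemma pattern_witnesses_subset_univ: "pattern_witnesses S \<subseteq> univ KU"
  unfolding pattern_witnesses_def using pattern_witness by (fastforce simp: tuple_in_def)

primrec stage :: "nat \<Rightarrow> (nat \<Rightarrow> 'a) set" where
  "stage 0 = insert (SOME d. d \<in> univ KU) (\<Union>i. set (c i))"
| "stage (Suc n) = skolem_step fa KU (stage n) \<union> pattern_witnesses (stage n) \<union> set (limit_realizer (stage n))"

definition b :: "nat \<Rightarrow> (nat \<Rightarrow> 'a) list" where
  "b n = limit_realizer (stage n)"

lemma stage_countable_univ: "countable (stage n) \<and> stage n \<subseteq> univ KU"
proof (induction n)
  case 0
  have "(SOME d. d \<in> univ KU) \<in> univ KU" by (rule some_in_univ[OF KU_struct])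
  moreover have "set (c i) \<subseteq> univ KU" for i using c_tuple by (simp add: tuple_in_def)
  moreover have "countable (\<Union>i. set (c i))" by (intro countable_UN) (auto intro: countable_finite)
  ultimately show ?case by auto
next
  case (Suc n)
  then have countable: "countable (stage n)" and univ: "stage n \<subseteq> univ KU" by auto
  have "tuple_in KU (length ys) (limit_realizer (stage n))"
    by (rule limit_realizer(1)[OF countable univ])
  then have "countable (set (limit_realizer (stage n)))" "set (limit_realizer (stage n)) \<subseteq> univ KU"
    by (auto simp: tuple_in_def intro: countable_finite)
  moreover have "countable (skolem_step fa KU (stage n))" using countable by (rule countable_skolem_step)
  moreover have "skolem_step fa KU (stage n) \<subseteq> univ KU" by (rule skolem_step_subset_univ[OF KU_struct univ])
  moreover have "countable (pattern_witnesses (stage n))" using countable by (rule countable_pattern_witnesses)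
  ultimately show ?case using pattern_witnesses_subset_univ by simp
qed

lemma stage_countable: "countable (stage n)"
  and stage_univ: "stage n \<subseteq> univ KU"
  using stage_countable_univ by blast+

sublocale chain: skolem_chain fa KU stage
proof
  show "is_struct fa KU" by (rule KU_struct)
  show "stage n \<subseteq> univ KU" for n by (rule stage_univ)
  show "stage 0 \<noteq> {}" by simp
  show "skolem_step fa KU (stage n) \<subseteq> stage (Suc n)" for n by auto
qed

lemma b_tuple: "tuple_in KU (length ys) (b n)"
  unfolding b_def by (rule limit_realizer(1)[OF stage_countable stage_univ])

lemma b_limit: "Q \<in> conditions (stage n) \<Longrightarrow> eventually (\<lambda>i. Q (c i)) U \<Longrightarrow> Q (b n)"
  unfolding b_def by (rule limit_realizer(2)[OF stage_countable stage_univ])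

lemma c_in_stage: "set (c i) \<subseteq> stage n"
proof -
  have "set (c i) \<subseteq> stage 0" by auto
  then show ?thesis using chain.S_mono[of 0 n] by blast
qed

lemma b_in_stage: "j < n \<Longrightarrow> set (b j) \<subseteq> stage n"
proof -
  have "set (b j) \<subseteq> stage (Suc j)" unfolding b_def stage.simps by blast
  then show "j < n \<Longrightarrow> ?thesis" using chain.S_mono[of "Suc j" n] by auto
qed

lemma labelled_in_patterns:
  assumes "finite D" "E \<subseteq> {..<n}"
  shows "labelled c D A' \<union> labelled b E A \<in> patterns (stage n)"
proof -
  have "c i \<in> tuples (stage n) (length ys)" for i
    using c_in_stage c_tuple unfolding tuples_def tuple_in_def by blast
  moreover have "b j \<in> tuples (stage n) (length ys)" if "j \<in> E" for j
    using that assms(2) b_in_stage b_tuple unfolding tuples_def tuple_in_def by blast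
  moreover have "finite E" using assms(2) finite_subset by blast
  ultimately show ?thesis using assms(1) unfolding patterns_def labelled_def by auto
qed

text \<open>Induction on \<open>n\<close>: the pattern extended by \<open>(y, n \<in> A)\<close> is realized for all \<open>y = c i\<close>
  with \<open>i \<notin> D\<close>, so it is part of the limit type realized by \<open>b n\<close>.\<close>

lemma IP_pattern: "finite D \<Longrightarrow> E \<subseteq> {..<n} \<Longrightarrow> pattern_realized KU \<phi> xs ys (labelled c D A' \<union> labelled b E A)"
proof (induction n arbitrary: D A' E)
  case 0
  then show ?case using c_independent by (simp add: labelled_def)
next
  case (Suc n)
  show ?case
  proof (cases "n \<in> E")
    case False
    then have "E \<subseteq> {..<n}" using Suc.prems(2) by (auto simp: less_Suc_eq)
    then show ?thesis using Suc.IH Suc.prems(1) by blast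
  next
    case True
    define E' where "E' = E - {n}"
    have E': "E' \<subseteq> {..<n}" using Suc.prems(2) by (auto simp: E'_def less_Suc_eq)
    define Z where "Z = labelled c D A' \<union> labelled b E' A"
    let ?Q = "\<lambda>y. pattern_realized KU \<phi> xs ys (insert (y, n \<in> A) Z)"
    have "(Z, n \<in> A) \<in> patterns (stage n) \<times> UNIV"
      unfolding Z_def using labelled_in_patterns[OF Suc.prems(1) E'] by blast
    then have "?Q \<in> conditions (stage n)" unfolding conditions_def by (intro UnI2 rev_image_eqI) auto
    moreover have "eventually (\<lambda>i. ?Q (c i)) U"
      using eventually_notin_finite[OF Suc.prems(1)]
    proof (rule eventually_mono)
      fix i assume "i \<notin> D"
      define A'' where "A'' = (if n \<in> A then insert i A' else A' - {i})"
      have "labelled c D A'' = labelled c D A'"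
        using \<open>i \<notin> D\<close> unfolding labelled_def A''_def by (intro image_cong) auto
      then have "insert (c i, n \<in> A) Z = labelled c (insert i D) A'' \<union> labelled b E' A"
        unfolding Z_def by (simp add: labelled_def A''_def)
      then show "?Q (c i)" using Suc.IH[of "insert i D" E' A''] Suc.prems(1) E' by simp
    qed
    ultimately have "?Q (b n)" by (rule b_limit)
    moreover have "insert (b n, n \<in> A) Z = labelled c D A' \<union> labelled b E A"
      unfolding Z_def E'_def labelled_def using True by auto
    ultimately show ?thesis by simp
  qed
qed

lemma b_tuple_N: "tuple_in chain.N (length ys) (b n)"
  using b_tuple b_in_stage[of n "Suc n"] unfolding tuple_in_def chain.N_simps by blast

lemma countable_univ_N: "countable (univ chain.N)"
  unfolding chain.N_simps by (rule countable_UN) (simp_all add: stage_countable)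

lemma has_IP_over_N: "has_IP_over chain.N \<phi> xs ys b"
  unfolding has_IP_over_def
proof (intro conjI allI impI b_tuple_N)
  fix A B :: "nat set" assume AB: "finite A \<and> finite B \<and> A \<inter> B = {}"
  obtain n where n: "A \<union> B \<subseteq> {..<n}" using AB finite_nat_bounded[of "A \<union> B"] by auto
  define Z where "Z = labelled b (A \<union> B) A"
  have "pattern_realized KU \<phi> xs ys Z"
    using IP_pattern[of "{}" "A \<union> B" n] n unfolding Z_def labelled_def by simp
  moreover have "Z \<in> patterns (stage n)"
    using labelled_in_patterns[of "{}" "A \<union> B" n] n unfolding Z_def labelled_def by simp
  ultimately have "set (pattern_witness Z) \<subseteq> pattern_witnesses (stage n)"
    unfolding pattern_witnesses_def by blast
  then have "set (pattern_witness Z) \<subseteq> (\<Union>n. stage n)"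
    using stage.simps(2)[of n] by blast
  moreover note witness = pattern_witness[OF \<open>pattern_realized KU \<phi> xs ys Z\<close>]
  ultimately have a: "tuple_in chain.N (length xs) (pattern_witness Z)"
    unfolding tuple_in_def chain.N_simps by blast
  have "holds KU \<phi> xs ys (pattern_witness Z) (b j) \<longleftrightarrow> j \<in> A" if "j \<in> A \<union> B" for j
    using witness that AB unfolding Z_def labelled_def by auto
  then show "\<exists>a. tuple_in chain.N (length xs) a \<and> (\<forall>n\<in>A. holds chain.N \<phi> xs ys a (b n)) \<and>
      (\<forall>n\<in>B. \<not> holds chain.N \<phi> xs ys a (b n))"
    using a chain.holds_N[OF a b_tuple_N fv_\<phi>] AB by (intro exI[of _ "pattern_witness Z"]) auto
qed

lemma eventually_decided_N: "eventually_decided chain.N \<phi> xs ys b"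
proof (rule eventually_decidedI)
  fix a assume a: "tuple_in chain.N (length xs) a"
  then obtain m where m: "set a \<subseteq> stage m"
    using chain.finite_subset_stage[of "set a"] unfolding tuple_in_def by auto
  let ?\<delta> = "eventually (\<lambda>i. holds KU \<phi> xs ys a (c i)) U"
  have "holds chain.N \<phi> xs ys a (b n) \<longleftrightarrow> ?\<delta>" if "m \<le> n" for n
  proof -
    have "a \<in> tuples (stage n) (length xs)"
      using m chain.S_mono[OF that] a unfolding tuples_def tuple_in_def by auto
    then have pos: "(\<lambda>y. holds KU \<phi> xs ys a y) \<in> conditions (stage n)"
      and neg: "(\<lambda>y. \<not> holds KU \<phi> xs ys a y) \<in> conditions (stage n)"
      unfolding conditions_def by blast+
    have "holds KU \<phi> xs ys a (b n) \<longleftrightarrow> ?\<delta>"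
    proof (cases ?\<delta>)
      case True then show ?thesis using b_limit[OF pos] by simp
    next
      case False
      then have "eventually (\<lambda>i. \<not> holds KU \<phi> xs ys a (c i)) U" using eventually_Not by simp
      then show ?thesis using b_limit[OF neg] False by simp
    qed
    then show ?thesis using chain.holds_N[OF a b_tuple_N fv_\<phi>] by simp
  qed
  then show "\<exists>\<delta>. eventually (\<lambda>n. holds chain.N \<phi> xs ys a (b n) \<longleftrightarrow> \<delta>) sequentially"
    unfolding eventually_sequentially by blast
qed

end

lemma has_IP_in_infinite_univ:
  assumes "has_IP_in K p xs ys"
  shows "infinite (univ K)"
proof
  assume fin: "finite (univ K)"
  define X where "X = {a. tuple_in K (length xs) a}"
  have "finite X"
    unfolding X_def tuple_in_def using finite_lists_length_eq[OF fin] by (simp add: conj_commute)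
  define n where "n = card X"
  obtain b where "\<forall>S \<subseteq> {..<n}. \<exists>a. tuple_in K (length xs) a \<and> (\<forall>i<n. holds K p xs ys a (b i) \<longleftrightarrow> i \<in> S)"
    using assms unfolding has_IP_in_def by blast
  then have "\<forall>S. \<exists>a. S \<subseteq> {..<n} \<longrightarrow> a \<in> X \<and> (\<forall>i<n. holds K p xs ys a (b i) \<longleftrightarrow> i \<in> S)"
    unfolding X_def by auto
  from choice[OF this] obtain f
    where f: "\<And>S. S \<subseteq> {..<n} \<Longrightarrow> f S \<in> X \<and> (\<forall>i<n. holds K p xs ys (f S) (b i) \<longleftrightarrow> i \<in> S)"
    by blast
  have "inj_on f (Pow {..<n})"
  proof (rule inj_onI)
    fix S S' assume "S \<in> Pow {..<n}" "S' \<in> Pow {..<n}" "f S = f S'"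
    then show "S = S'" using f[of S] f[of S'] by auto
  qed
  then have "card (Pow {..<n}) \<le> card X"
    using f \<open>finite X\<close> by (intro card_inj_on_le) auto
  then have "2 ^ n \<le> n" unfolding n_def by (simp add: card_Pow)
  then show False using less_exp[of n] by simp
qed

lemma countable_inj_into_infinite:
  assumes "countable A" "infinite (UNIV :: 'b set)"
  obtains h :: "'a \<Rightarrow> 'b" where "inj_on h A"
proof -
  obtain f :: "nat \<Rightarrow> 'b" where "inj f" using infinite_countable_subset[OF assms(2)] by blast
  moreover have "inj_on (to_nat_on A) A" using assms(1) by (rule inj_on_to_nat_on)
  ultimately have "inj_on (f \<circ> to_nat_on A) A" by (auto intro: comp_inj_on inj_on_subset)
  then show ?thesis by (rule that)
qed

theorem claim4p4:
  fixes fa :: "'f::countable \<Rightarrow> nat" and ra :: "'r::countable \<Rightarrow> nat"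
    and T :: "('f, 'r) fm set"
    and \<phi> :: "('f, 'r) fm" and xs ys :: "nat list"
  assumes T_sent: "\<forall>\<sigma>\<in>T. sentence fa ra \<sigma>"
    and T_complete: "\<forall>\<sigma>. sentence fa ra \<sigma> \<longrightarrow>
        (\<forall>M :: ('f, 'r, 'a) struct. is_model fa T M \<longrightarrow> (\<forall>e. range e \<subseteq> univ M \<longrightarrow> sat M e \<sigma>)) \<or>
        (\<forall>M :: ('f, 'r, 'a) struct. is_model fa T M \<longrightarrow> (\<forall>e. range e \<subseteq> univ M \<longrightarrow> \<not> sat M e \<sigma>))"
    and phi_wf: "wf_fm fa ra \<phi>"
    and vars: "distinct (xs @ ys)" "fv \<phi> \<subseteq> set xs \<union> set ys"
    and IP: "\<exists>M :: ('f, 'r, 'a) struct. is_model fa T M \<and> has_IP_in M \<phi> xs ys"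
  shows "\<exists>(M :: ('f, 'r, 'a) struct) (b :: nat \<Rightarrow> 'a list).
           is_model fa T M \<and> countable (univ M) \<and>
           (\<forall>n. tuple_in M (length ys) (b n)) \<and>
           (\<forall>A B. finite A \<and> finite B \<and> A \<inter> B = {} \<longrightarrow>
              (\<exists>a. tuple_in M (length xs) a \<and>
                   (\<forall>n\<in>A. holds M \<phi> xs ys a (b n)) \<and>
                   (\<forall>n\<in>B. \<not> holds M \<phi> xs ys a (b n)))) \<and>
           (\<forall>a. tuple_in M (length xs) a \<longrightarrow>
              (\<exists>t\<in>{0::nat, 1}. finite {n. \<not> holds M (fm_pow \<phi> t) xs ys a (b n)}))"
proof -
  obtain K :: "('f, 'r, 'a) struct" where K: "is_model fa T K" "has_IP_in K \<phi> xs ys"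
    using IP by blast
  obtain U :: "nat filter" where U: "ultrafilter U" "U \<le> sequentially"
    using ex_nonprincipal_ultrafilter by blast
  have "is_struct fa K" using K(1) unfolding is_model_def by blast
  with U K(2) vars(2) interpret IP_ultrapower U fa K \<phi> xs ys
    by unfold_locales
  have "infinite (UNIV :: 'a set)"
    using subset_UNIV has_IP_in_infinite_univ[OF K(2)] by (rule infinite_super)
  then obtain h :: "(nat \<Rightarrow> 'a) \<Rightarrow> 'a" where "inj_on h (univ chain.N)"
    by (rule countable_inj_into_infinite[OF countable_univ_N])
  then interpret image: struct_image fa chain.N h
    using chain.N_struct by unfold_locales
  have "is_model fa T image.M"
    using image.M_model[OF chain.N_model[OF KU_model[OF K(1) T_sent]] T_sent] .
  moreover have "countable (univ image.M)"
    unfolding image.M_simps using countable_univ_N by simp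
  moreover have "has_IP_over image.M \<phi> xs ys (\<lambda>n. map h (b n))"
    by (rule image.has_IP_over_image[OF phi_wf vars(2) has_IP_over_N])
  moreover have "eventually_decided image.M \<phi> xs ys (\<lambda>n. map h (b n))"
    by (rule image.eventually_decided_image[OF phi_wf vars(2) b_tuple_N eventually_decided_N])
  ultimately show ?thesis
    unfolding has_IP_over_def eventually_decided_def
    by (intro exI[of _ image.M] exI[of _ "\<lambda>n. map h (b n)"]) (elim conjE, intro conjI)
qed

end
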